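(* Let $n\ge 4$ and let $\mathcal M$ be an IP-SEG* model which is an IP-SEG representation of the chordless cycle $C_n$ and contains at least one interval segment. Then the (unique) permutation arc of $\mathcal M$ consists of at least $2$ and at most $4$ permutation segments.
   Context: Let $L_1$ and $L_2$ be two distinct parallel horizontal lines in the plane. A closed straight line segment is an interval segment if both of its endpoints lie on the same line $L_i$, and a permutation segment if one endpoint lies on $L_1$ and the other on $L_2$. An IP-SEG model is a finite family of interval and permutation segments; its intersection graph has one vertex per segment, adjacent iff the segments intersect. An IP-SEG* model is an IP-SEG model in which all interval segments lie on the same line $L_i$. For $m\ge 3$, $C_m$ is the chordless cycle on $v_1,\dots,v_m$ with $v_i$ adjacent to $v_{i+1}$ (indices mod $m$) and no other edges. An IP-SEG representation of $C_m$ is an IP-SEG model with segments $s(v_1),\dots,s(v_m)$ whose intersection graph is $C_m$ with $s(v_i)$ corresponding to $v_i$. A permutation arc is a maximal sequence of cyclically consecutive segments $s(v_i),\dots,s(v_j)$ that are all permutation segments; an interval arc is defined analogously with interval segments. *)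

theory Defs
  imports "HOL-Analysis.Analysis"
begin

text \<open>Points of the plane are pairs (x,y); the two parallel horizontal lines are
  L1 = {y = c1} and L2 = {y = c2} with c1 \<noteq> c2.\<close>

type_synonym point = "real \<times> real"
type_synonym seg = "point \<times> point"

definition seg_set :: "seg \<Rightarrow> point set" where
  "seg_set s = closed_segment (fst s) (snd s)"

definition on_line :: "real \<Rightarrow> point \<Rightarrow> bool" where
  "on_line c p \<longleftrightarrow> snd p = c"

definition interval_seg_on :: "real \<Rightarrow> seg \<Rightarrow> bool" where
  "interval_seg_on c s \<longleftrightarrow> on_line c (fst s) \<and> on_line c (snd s)"

definition interval_seg :: "real \<Rightarrow> real \<Rightarrow> seg \<Rightarrow> bool" where
  "interval_seg c1 c2 s \<longleftrightarrow> interval_seg_on c1 s \<or> interval_seg_on c2 s"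

definition perm_seg :: "real \<Rightarrow> real \<Rightarrow> seg \<Rightarrow> bool" where
  "perm_seg c1 c2 s \<longleftrightarrow>
     (on_line c1 (fst s) \<and> on_line c2 (snd s)) \<or> (on_line c2 (fst s) \<and> on_line c1 (snd s))"

text \<open>An IP-SEG model with segments s 0, ..., s (n-1) (vertex v_(i+1) is index i).\<close>
definition ip_seg_model :: "real \<Rightarrow> real \<Rightarrow> nat \<Rightarrow> (nat \<Rightarrow> seg) \<Rightarrow> bool" where
  "ip_seg_model c1 c2 n s \<longleftrightarrow> c1 \<noteq> c2 \<and>
     (\<forall>i<n. interval_seg c1 c2 (s i) \<or> perm_seg c1 c2 (s i))"

definition ip_seg_star_model :: "real \<Rightarrow> real \<Rightarrow> nat \<Rightarrow> (nat \<Rightarrow> seg) \<Rightarrow> bool" where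
  "ip_seg_star_model c1 c2 n s \<longleftrightarrow> ip_seg_model c1 c2 n s \<and>
     ((\<forall>i<n. interval_seg c1 c2 (s i) \<longrightarrow> interval_seg_on c1 (s i)) \<or>
      (\<forall>i<n. interval_seg c1 c2 (s i) \<longrightarrow> interval_seg_on c2 (s i)))"

definition cycle_adj :: "nat \<Rightarrow> nat \<Rightarrow> nat \<Rightarrow> bool" where
  "cycle_adj n i j \<longleftrightarrow> i \<noteq> j \<and> (j = Suc i mod n \<or> i = Suc j mod n)"

definition represents_cycle :: "nat \<Rightarrow> (nat \<Rightarrow> seg) \<Rightarrow> bool" where
  "represents_cycle n s \<longleftrightarrow>
     (\<forall>i<n. \<forall>j<n. i \<noteq> j \<longrightarrow>
        (seg_set (s i) \<inter> seg_set (s j) \<noteq> {} \<longleftrightarrow> cycle_adj n i j))"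

text \<open>A permutation arc: a maximal set of cyclically consecutive indices
  {i, i+1, ..., i+k-1} (mod n), k \<ge> 1, all of whose segments are permutation segments.\<close>
definition perm_arc :: "real \<Rightarrow> real \<Rightarrow> nat \<Rightarrow> (nat \<Rightarrow> seg) \<Rightarrow> nat set \<Rightarrow> bool" where
  "perm_arc c1 c2 n s A \<longleftrightarrow>
     (\<exists>i k. i < n \<and> 1 \<le> k \<and> k \<le> n \<and> A = {(i + t) mod n | t. t < k} \<and>
        (\<forall>t<k. perm_seg c1 c2 (s ((i + t) mod n))) \<and>
        (k < n \<longrightarrow> \<not> perm_seg c1 c2 (s ((i + n - 1) mod n)) \<and>
                    \<not> perm_seg c1 c2 (s ((i + k) mod n))))"

end

theory Submission
  imports Defs
begin

text \<open>Segments are compared by the x-coordinate of their endpoint on the line y = c carrying the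
  interval segments. Two segments that meet each other but miss a permutation segment z lie on
  the same side of z, hence so do the ends of any path of the cycle avoiding z. Inside a run of
  at least five permutation segments, the first, the third and the last are pairwise disjoint and
  each is avoided by a path joining the other two, so none of their three distinct positions lies
  between the other two, which is absurd; the same argument, entering the paths through the interval
  segments flanking a run, rules out a permutation segment outside the run, so there is only one
  arc. A lone permutation segment would make its two interval neighbours meet at its endpoint, and
  an interval segment with leftmost right end would do the same, so every run has at least two
  segments and a run exists.\<close>

definition pos_on :: "real \<Rightarrow> seg \<Rightarrow> real" where
  "pos_on c p = (if snd (fst p) = c then fst (fst p) else fst (snd p))"

definition pos_off :: "real \<Rightarrow> seg \<Rightarrow> real" where
  "pos_off c p = (if snd (fst p) = c then fst (snd p) else fst (fst p))"

lemma closed_segment_Pair: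
  "closed_segment (a1::real, a2::real) (b1, b2) =
     {((1 - u) * a1 + u * b1, (1 - u) * a2 + u * b2) | u. 0 \<le> u \<and> u \<le> 1}"
  by (auto simp: closed_segment_def scaleR_prod_def)

lemma interval_seg_on_set:
  assumes "interval_seg_on c a"
  shows "seg_set a = closed_segment (pos_on c a) (pos_off c a) \<times> {c}"
proof -
  obtain x1 x2 where "a = ((x1, c), (x2, c))"
    using assms unfolding interval_seg_on_def on_line_def by (metis prod.collapse)
  then show ?thesis by (simp add: seg_set_def pos_on_def pos_off_def closed_segment_same_snd)
qed

lemma perm_seg_set:
  assumes "c \<noteq> d" "perm_seg c d p"
  shows "seg_set p = closed_segment (pos_on c p, c) (pos_off c p, d)"
proof -
  obtain x1 y1 x2 y2 where "p = ((x1, y1), (x2, y2))" by (metis prod.collapse)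
  with assms show ?thesis
    by (auto simp: perm_seg_def on_line_def seg_set_def pos_on_def pos_off_def closed_segment_commute)
qed

lemma interval_seg_on_not_perm: "c \<noteq> d \<Longrightarrow> interval_seg_on c a \<Longrightarrow> \<not> perm_seg c d a"
  by (auto simp: interval_seg_on_def perm_seg_def on_line_def)

lemma pos_on_mem:
  "c \<noteq> d \<Longrightarrow> interval_seg_on c p \<or> perm_seg c d p \<Longrightarrow> (pos_on c p, c) \<in> seg_set p"
  by (auto simp: interval_seg_on_set perm_seg_set)

lemma perm_seg_point_on_line:
  assumes "c \<noteq> d" "perm_seg c d p" "w \<in> seg_set p" "snd w = c"
  shows "w = (pos_on c p, c)"
proof -
  from assms obtain u where u: "0 \<le> u" "u \<le> 1"
    "w = ((1 - u) * pos_on c p + u * pos_off c p, (1 - u) * c + u * d)"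
    by (auto simp: perm_seg_set closed_segment_Pair)
  then have "u * (d - c) = 0" using assms(4) by (simp add: algebra_simps)
  with \<open>c \<noteq> d\<close> u show ?thesis by simp
qed

lemma convex_combination_eq_0_iff:
  fixes A B :: real
  shows "(\<exists>u. 0 \<le> u \<and> u \<le> 1 \<and> (1 - u) * A + u * B = 0) \<longleftrightarrow> A * B \<le> 0"
proof
  assume "\<exists>u. 0 \<le> u \<and> u \<le> 1 \<and> (1 - u) * A + u * B = 0"
  then obtain u where u: "0 \<le> u" "u \<le> 1" "(1 - u) * A + u * B = 0" by blast
  have "A * B = ((1 - u) * A + u * B) * (A + B) - (u * B\<^sup>2 + (1 - u) * A\<^sup>2)"
    by (simp add: algebra_simps power2_eq_square)
  moreover have "0 \<le> u * B\<^sup>2 + (1 - u) * A\<^sup>2"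
    using u by (intro add_nonneg_nonneg mult_nonneg_nonneg) auto
  ultimately show "A * B \<le> 0" using u(3) by simp
next
  assume AB: "A * B \<le> 0"
  show "\<exists>u. 0 \<le> u \<and> u \<le> 1 \<and> (1 - u) * A + u * B = 0"
  proof (cases "A = B")
    case True
    with AB have "A = 0" by (auto simp: mult_le_0_iff)
    with True show ?thesis by (intro exI[of _ 0]) simp
  next
    case False
    have "0 \<le> A / (A - B) \<and> A / (A - B) \<le> 1"
      using AB False by (cases "A < B") (auto simp: mult_le_0_iff divide_simps)
    moreover have "(1 - A / (A - B)) * A + A / (A - B) * B = 0"
      using False by (simp add: field_simps)
    ultimately show ?thesis by blast
  qed
qed

lemma perm_segs_meet_iff:
  assumes "c \<noteq> d" "perm_seg c d p" "perm_seg c d q"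
  shows "seg_set p \<inter> seg_set q \<noteq> {} \<longleftrightarrow>
    (pos_on c p - pos_on c q) * (pos_off c p - pos_off c q) \<le> 0"
proof -
  have same_height: "u = r" if "(1 - u) * c + u * d = (1 - r) * c + r * d" for u r
  proof -
    have "(u - r) * (d - c) = 0" using that by (simp add: algebra_simps)
    with \<open>c \<noteq> d\<close> show ?thesis by simp
  qed
  have "seg_set p \<inter> seg_set q \<noteq> {} \<longleftrightarrow> (\<exists>u. 0 \<le> u \<and> u \<le> 1 \<and>
      (1 - u) * pos_on c p + u * pos_off c p = (1 - u) * pos_on c q + u * pos_off c q)"
    unfolding perm_seg_set[OF assms(1,2)] perm_seg_set[OF assms(1,3)] closed_segment_Pair
    using same_height by blast
  also have "\<dots> \<longleftrightarrow> (\<exists>u. 0 \<le> u \<and> u \<le> 1 \<and>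
      (1 - u) * (pos_on c p - pos_on c q) + u * (pos_off c p - pos_off c q) = 0)"
    by (simp add: algebra_simps)
  finally show ?thesis by (simp only: convex_combination_eq_0_iff)
qed

lemma disjoint_perm_segs_ordered:
  assumes "c \<noteq> d" "perm_seg c d p" "perm_seg c d q" "seg_set p \<inter> seg_set q = {}"
  shows "pos_on c p < pos_on c q \<and> pos_off c p < pos_off c q \<or>
    pos_on c q < pos_on c p \<and> pos_off c q < pos_off c p"
proof -
  have "0 < (pos_on c p - pos_on c q) * (pos_off c p - pos_off c q)"
    using perm_segs_meet_iff[OF assms(1-3)] assms(4) by linarith
  then show ?thesis by (auto simp: zero_less_mult_iff)
qed

lemma interval_seg_on_side:
  assumes "interval_seg_on c a" "(x, c) \<in> seg_set a" "(y, c) \<in> seg_set a" "(w, c) \<notin> seg_set a"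
  shows "x < w \<longleftrightarrow> y < w"
  using assms by (auto simp: interval_seg_on_set closed_segment_eq_real_ivl split: if_splits)

lemma same_side_of_mem:
  assumes cd: "c \<noteq> d" and z: "perm_seg c d z" and x: "interval_seg_on c x \<or> perm_seg c d x"
    and xz: "seg_set x \<inter> seg_set z = {}" and a: "(a, c) \<in> seg_set x"
  shows "a < pos_on c z \<longleftrightarrow> pos_on c x < pos_on c z"
proof (cases "perm_seg c d x")
  case True
  then show ?thesis using perm_seg_point_on_line[OF cd True a] by simp
next
  case False
  with x have "interval_seg_on c x" by simp
  moreover have "(pos_on c z, c) \<notin> seg_set x" using xz pos_on_mem[OF cd] z by blast
  ultimately show ?thesis using interval_seg_on_side pos_on_mem[OF cd x] a by blast
qed

lemma meeting_segs_same_side: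
  assumes cd: "c \<noteq> d" and z: "perm_seg c d z"
    and x: "interval_seg_on c x \<or> perm_seg c d x" and y: "interval_seg_on c y \<or> perm_seg c d y"
    and xy: "seg_set x \<inter> seg_set y \<noteq> {}"
    and xz: "seg_set x \<inter> seg_set z = {}" and yz: "seg_set y \<inter> seg_set z = {}"
  shows "pos_on c x < pos_on c z \<longleftrightarrow> pos_on c y < pos_on c z"
proof -
  obtain w where w: "w \<in> seg_set x" "w \<in> seg_set y" using xy by blast
  show ?thesis
  proof (cases "snd w = c")
    case True
    then have "(fst w, c) \<in> seg_set x" "(fst w, c) \<in> seg_set y" using w by (metis prod.collapse)+
    then show ?thesis using same_side_of_mem[OF cd z x xz] same_side_of_mem[OF cd z y yz] by blast
  next
    case False
    \<comment> \<open>interval segments lie on y = c\<close>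
    then have px: "perm_seg c d x" and py: "perm_seg c d y"
      using w x y by (auto simp: interval_seg_on_set)
    have "(pos_on c x - pos_on c y) * (pos_off c x - pos_off c y) \<le> 0"
      using perm_segs_meet_iff[OF cd px py] xy by blast
    then show ?thesis
      using disjoint_perm_segs_ordered[OF cd px z xz] disjoint_perm_segs_ordered[OF cd py z yz]
      by (auto simp: mult_le_0_iff)
  qed
qed

lemma path_same_side:
  assumes cd: "c \<noteq> d" and z: "perm_seg c d z" and "a \<le> b"
    and "\<forall>j\<in>{a..b}. interval_seg_on c (g j) \<or> perm_seg c d (g j)"
    and "\<forall>j\<in>{a..<b}. seg_set (g j) \<inter> seg_set (g (Suc j)) \<noteq> {}"
    and "\<forall>j\<in>{a..b}. seg_set (g j) \<inter> seg_set z = {}"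
  shows "pos_on c (g a) < pos_on c z \<longleftrightarrow> pos_on c (g b) < pos_on c z"
  using assms(3-)
proof (induction b rule: dec_induct)
  case (step m)
  then have "pos_on c (g m) < pos_on c z \<longleftrightarrow> pos_on c (g (Suc m)) < pos_on c z"
    by (intro meeting_segs_same_side[OF cd z]) auto
  with step show ?case by simp
qed simp

lemma perm_meets_interval_at_pos_on:
  assumes "c \<noteq> d" "perm_seg c d p" "interval_seg_on c a" "seg_set p \<inter> seg_set a \<noteq> {}"
  shows "(pos_on c p, c) \<in> seg_set a"
proof -
  obtain w where w: "w \<in> seg_set p" "w \<in> seg_set a" using assms(4) by blast
  then have "snd w = c" using assms(3) by (auto simp: interval_seg_on_set)
  then have "w = (pos_on c p, c)" using perm_seg_point_on_line[OF assms(1,2) w(1)] by blast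
  with w show ?thesis by simp
qed

lemma interval_segs_meet_contains_right_end:
  assumes "interval_seg_on c a" "interval_seg_on c b" "seg_set a \<inter> seg_set b \<noteq> {}"
    and "max (pos_on c a) (pos_off c a) \<le> max (pos_on c b) (pos_off c b)"
  shows "(max (pos_on c a) (pos_off c a), c) \<in> seg_set b"
  using assms by (auto simp: interval_seg_on_set closed_segment_eq_real_ivl split: if_splits)

lemma none_between_imp_not_distinct:
  fixes a b x :: real
  assumes "x < a \<longleftrightarrow> b < a" "a < b \<longleftrightarrow> x < b" "b < x \<longleftrightarrow> a < x"
  shows "x = a \<or> x = b \<or> a = b"
  using assms by linarith

lemma mod_eq_imp_eq_nat:
  fixes x y n :: nat
  assumes "x \<le> y" "y < x + n" "x mod n = y mod n"
  shows "x = y"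
proof -
  have "n dvd y - x" using assms(1,3) mod_eq_dvd_iff_nat by metis
  moreover have "y - x < n" using assms(1,2) by simp
  ultimately have "y - x = 0" by (metis dvd_imp_le gr0I not_le)
  with assms(1) show ?thesis by simp
qed

lemma exists_mod_offset:
  fixes i j n :: nat
  assumes "j < n"
  shows "\<exists>t<n. (i + t) mod n = j"
proof (intro exI conjI)
  show "(j + n - i mod n) mod n < n" using assms by simp
  have "(i + (j + n - i mod n) mod n) mod n = (i mod n + (j + n - i mod n)) mod n"
    by (simp add: mod_add_left_eq mod_add_right_eq)
  also have "i mod n + (j + n - i mod n) = j + n" using mod_less_divisor[of n i] assms by linarith
  also have "(j + n) mod n = j" using assms by simp
  finally show "(i + (j + n - i mod n) mod n) mod n = j" .
qed

locale ip_cycle =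
  fixes c d :: real and n :: nat and s :: "nat \<Rightarrow> seg"
  assumes lines_distinct: "c \<noteq> d" and four_le_n: "4 \<le> n"
    and seg_kinds: "\<forall>i<n. interval_seg_on c (s i) \<or> perm_seg c d (s i)"
    and represents: "represents_cycle n s"
    and has_interval: "\<exists>i<n. interval_seg_on c (s i)"
begin

text \<open>Indices are read modulo n, so the neighbours of j are Suc j and j + n - 1.\<close>

definition seg_at :: "nat \<Rightarrow> seg" where
  "seg_at j = s (j mod n)"

abbreviation perm_at :: "nat \<Rightarrow> bool" where
  "perm_at j \<equiv> perm_seg c d (seg_at j)"

abbreviation pos_at :: "nat \<Rightarrow> real" where
  "pos_at j \<equiv> pos_on c (seg_at j)"

lemma n_pos: "0 < n"
  using four_le_n by simp

lemma seg_at_kind: "interval_seg_on c (seg_at j) \<or> perm_at j"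
  using seg_kinds n_pos by (simp add: seg_at_def)

lemma interval_at: "\<not> perm_at j \<Longrightarrow> interval_seg_on c (seg_at j)"
  using seg_at_kind by blast

lemma seg_at_add_n [simp]: "seg_at (j + n) = seg_at j"
  by (simp add: seg_at_def)

lemma seg_at_mod [simp]: "seg_at (j mod n) = seg_at j"
  by (simp add: seg_at_def)

lemma seg_at_mod_add [simp]: "seg_at (j mod n + t) = seg_at (j + t)"
  by (simp add: seg_at_def mod_add_left_eq)

lemma seg_at_eq: "j < n \<Longrightarrow> seg_at j = s j"
  by (simp add: seg_at_def)

lemma meet_iff:
  assumes "a < b" "b < a + n"
  shows "seg_set (seg_at a) \<inter> seg_set (seg_at b) \<noteq> {} \<longleftrightarrow> b = Suc a \<or> Suc b = a + n"
proof -
  have neq: "a mod n \<noteq> b mod n"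
    using mod_eq_imp_eq_nat[of a b n] assms by auto
  have "a mod n < n" "b mod n < n" using n_pos by simp_all
  then have "seg_set (seg_at a) \<inter> seg_set (seg_at b) \<noteq> {} \<longleftrightarrow> cycle_adj n (a mod n) (b mod n)"
    using represents neq unfolding represents_cycle_def seg_at_def by blast
  also have "\<dots> \<longleftrightarrow> b mod n = Suc a mod n \<or> (a + n) mod n = Suc b mod n"
    using neq by (simp add: cycle_adj_def mod_Suc_eq)
  also have "\<dots> \<longleftrightarrow> b = Suc a \<or> Suc b = a + n"
  proof
    assume "b mod n = Suc a mod n \<or> (a + n) mod n = Suc b mod n"
    then show "b = Suc a \<or> Suc b = a + n"
    proof
      assume "b mod n = Suc a mod n"
      then show ?thesis using mod_eq_imp_eq_nat[of "Suc a" b n] assms by simp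
    next
      assume "(a + n) mod n = Suc b mod n"
      then show ?thesis using mod_eq_imp_eq_nat[of "Suc b" "a + n" n] assms by simp
    qed
  qed auto
  finally show ?thesis .
qed

lemma meets_Suc: "seg_set (seg_at j) \<inter> seg_set (seg_at (Suc j)) \<noteq> {}"
  using meet_iff[of j "Suc j"] four_le_n by simp

lemma meets_pred: "seg_set (seg_at j) \<inter> seg_set (seg_at (j + n - 1)) \<noteq> {}"
  using meet_iff[of j "j + n - 1"] four_le_n by simp

lemma far_apart_disjoint:
  "a + 2 \<le> b \<Longrightarrow> b + 2 \<le> a + n \<Longrightarrow> seg_set (seg_at a) \<inter> seg_set (seg_at b) = {}"
  using meet_iff[of a b] by auto

lemma far_apart_disjoint':
  "a + 2 \<le> b \<Longrightarrow> b + 2 \<le> a + n \<Longrightarrow> seg_set (seg_at b) \<inter> seg_set (seg_at a) = {}"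
  using far_apart_disjoint by blast

lemma chain_same_side:
  assumes "perm_seg c d z" "a \<le> b" "\<forall>j\<in>{a..b}. seg_set (seg_at j) \<inter> seg_set z = {}"
  shows "pos_at a < pos_on c z \<longleftrightarrow> pos_at b < pos_on c z"
  using path_same_side[OF lines_distinct assms(1,2)] assms(3) seg_at_kind meets_Suc by blast

lemma perm_at_pos_distinct:
  assumes "perm_at a" "perm_at b" "seg_set (seg_at a) \<inter> seg_set (seg_at b) = {}"
  shows "pos_at a \<noteq> pos_at b"
  using disjoint_perm_segs_ordered[OF lines_distinct assms] by auto

lemma exists_perm: "\<exists>j. perm_at j"
proof (rule ccontr)
  assume "\<nexists>j. perm_at j"
  then have ivl: "interval_seg_on c (seg_at j)" for j using interval_at by blast
  define r where "r j = max (pos_at j) (pos_off c (seg_at j))" for j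
  obtain i where "i < n" and min: "\<forall>j<n. r i \<le> r j"
    using ex_min_if_finite[of "r ` {..<n}"] n_pos by (auto simp: not_less)
  have "r i \<le> r j" for j
    using min[rule_format, of "j mod n"] n_pos by (simp add: r_def)
  then have "(r i, c) \<in> seg_set (seg_at j)" if "seg_set (seg_at i) \<inter> seg_set (seg_at j) \<noteq> {}" for j
    using interval_segs_meet_contains_right_end[OF ivl ivl that] by (simp add: r_def)
  then have "(r i, c) \<in> seg_set (seg_at (Suc i)) \<inter> seg_set (seg_at (i + n - 1))"
    using meets_Suc meets_pred by blast
  moreover have "seg_set (seg_at (Suc i)) \<inter> seg_set (seg_at (i + n - 1)) = {}"
    using four_le_n by (intro far_apart_disjoint) auto
  ultimately show False by blast
qed

lemma perm_has_perm_neighbour: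
  assumes "perm_at i"
  shows "perm_at (Suc i) \<or> perm_at (i + n - 1)"
proof (rule ccontr)
  assume "\<not> (perm_at (Suc i) \<or> perm_at (i + n - 1))"
  then have "(pos_at i, c) \<in> seg_set (seg_at (Suc i)) \<inter> seg_set (seg_at (i + n - 1))"
    using perm_meets_interval_at_pos_on[OF lines_distinct assms] interval_at meets_Suc meets_pred
    by blast
  moreover have "seg_set (seg_at (Suc i)) \<inter> seg_set (seg_at (i + n - 1)) = {}"
    using four_le_n by (intro far_apart_disjoint) auto
  ultimately show False by blast
qed

lemma perm_run_le_4:
  assumes run: "\<forall>t<k. perm_at (i + t)" and "k < n"
  shows "k \<le> 4"
proof (rule ccontr)
  assume "\<not> k \<le> 4"
  define l where "l = i + k - 1"
  have perm: "perm_at i" "perm_at (i + 2)" "perm_at l"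
    using run[rule_format, of 0] run[rule_format, of 2] run[rule_format, of "k - 1"] \<open>\<not> k \<le> 4\<close>
    by (simp_all add: l_def)
  have bounds: "i + 4 \<le> l" "l + 2 \<le> i + n" using \<open>\<not> k \<le> 4\<close> \<open>k < n\<close> by (simp_all add: l_def)
  have "pos_at (i + 2) < pos_at i \<longleftrightarrow> pos_at l < pos_at i"
    using bounds by (intro chain_same_side perm(1)) (auto intro!: far_apart_disjoint')
  moreover have "pos_at i < pos_at l \<longleftrightarrow> pos_at (i + 2) < pos_at l"
    using bounds by (intro chain_same_side perm(3)) (auto intro!: far_apart_disjoint)
  moreover have "pos_at l < pos_at (i + 2) \<longleftrightarrow> pos_at (i + n) < pos_at (i + 2)"
    using bounds by (intro chain_same_side perm(2)) (auto intro!: far_apart_disjoint')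
  moreover have "pos_at i \<noteq> pos_at (i + 2)"
    using four_le_n by (intro perm_at_pos_distinct perm far_apart_disjoint) auto
  moreover have "pos_at (i + 2) \<noteq> pos_at l"
    using bounds by (intro perm_at_pos_distinct perm far_apart_disjoint) auto
  moreover have "pos_at i \<noteq> pos_at l"
    using bounds by (intro perm_at_pos_distinct perm far_apart_disjoint) auto
  ultimately show False
    using none_between_imp_not_distinct[of "pos_at (i + 2)" "pos_at i" "pos_at l"] by auto
qed

lemma no_perm_beyond_run:
  assumes run: "\<forall>t<k. perm_at (i + t)" and "2 \<le> k"
    and next_ivl: "\<not> perm_at (i + k)" and prev_ivl: "\<not> perm_at (i + n - 1)"
    and q: "i + k < q" "q + 2 \<le> i + n"
  shows "\<not> perm_at q"
proof
  assume perm_q: "perm_at q"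
  define l where "l = i + k - 1"
  have perm: "perm_at i" "perm_at l"
    using run[rule_format, of 0] run[rule_format, of "k - 1"] \<open>2 \<le> k\<close> by (simp_all add: l_def)
  have "Suc l = i + k" using \<open>2 \<le> k\<close> by (simp add: l_def)
  then have l_in_next: "(pos_at l, c) \<in> seg_set (seg_at (i + k))"
    using perm_meets_interval_at_pos_on[OF lines_distinct perm(2) interval_at[OF next_ivl]] meets_Suc
    by metis
  have i_in_prev: "(pos_at i, c) \<in> seg_set (seg_at (i + n - 1))"
    using perm_meets_interval_at_pos_on[OF lines_distinct perm(1) interval_at[OF prev_ivl]] meets_pred
    by blast
  have bounds: "i < l" "l + 2 \<le> q" using \<open>2 \<le> k\<close> q by (simp_all add: l_def)
  \<comment> \<open>paths of the cycle avoiding one of i, l, q show that none of their positions lies strictly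
    between the other two\<close>
  have "pos_at i < pos_at q \<longleftrightarrow> pos_at l < pos_at q"
    using bounds q by (intro chain_same_side perm_q) (auto intro!: far_apart_disjoint)
  moreover have "pos_at l < pos_at i \<longleftrightarrow> pos_at (i + k) < pos_at i"
    using same_side_of_mem[OF lines_distinct perm(1) seg_at_kind far_apart_disjoint' l_in_next]
      \<open>2 \<le> k\<close> q by simp
  moreover have "\<dots> \<longleftrightarrow> pos_at q < pos_at i"
    using \<open>2 \<le> k\<close> q by (intro chain_same_side perm(1)) (auto intro!: far_apart_disjoint')
  moreover have "pos_at i < pos_at l \<longleftrightarrow> pos_at (i + n - 1) < pos_at l"
    using same_side_of_mem[OF lines_distinct perm(2) seg_at_kind far_apart_disjoint' i_in_prev]
      bounds q by (simp add: l_def)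
  moreover have "pos_at q < pos_at l \<longleftrightarrow> pos_at (i + n - 1) < pos_at l"
    using bounds q by (intro chain_same_side perm(2)) (auto intro!: far_apart_disjoint')
  moreover have "pos_at q \<noteq> pos_at i"
    using bounds q by (intro perm_at_pos_distinct perm perm_q far_apart_disjoint') auto
  moreover have "pos_at q \<noteq> pos_at l"
    using bounds q by (intro perm_at_pos_distinct perm perm_q far_apart_disjoint') auto
  ultimately have "pos_at i = pos_at l"
    using none_between_imp_not_distinct[of "pos_at q" "pos_at i" "pos_at l"] by auto
  then have "(pos_at i, c) \<in> seg_set (seg_at (i + k)) \<inter> seg_set (seg_at (i + n - 1))"
    using l_in_next i_in_prev by simp
  moreover have "seg_set (seg_at (i + k)) \<inter> seg_set (seg_at (i + n - 1)) = {}"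
    using \<open>2 \<le> k\<close> q by (intro far_apart_disjoint) auto
  ultimately show False by blast
qed

lemma maximal_perm_run:
  assumes run: "\<forall>t<k. perm_at (i + t)" and "1 \<le> k" "k < n"
    and next_ivl: "\<not> perm_at (i + k)" and prev_ivl: "\<not> perm_at (i + n - 1)"
  shows "2 \<le> k" and "t < n \<Longrightarrow> perm_at (i + t) \<longleftrightarrow> t < k"
proof -
  show two: "2 \<le> k"
  proof (rule ccontr)
    assume "\<not> 2 \<le> k"
    with \<open>1 \<le> k\<close> have "k = 1" by simp
    then show False using perm_has_perm_neighbour[of i] run next_ivl prev_ivl by auto
  qed
  show "perm_at (i + t) \<longleftrightarrow> t < k" if "t < n"
  proof (cases "t < k \<or> t = k \<or> t = n - 1")
    case True
    then show ?thesis using run next_ivl prev_ivl \<open>k < n\<close> by auto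
  next
    case False
    then have "i + k < i + t" "i + t + 2 \<le> i + n" using \<open>t < n\<close> by auto
    with False show ?thesis using no_perm_beyond_run[OF run two next_ivl prev_ivl] by auto
  qed
qed

lemma perm_arc_iff:
  "perm_arc c d n s A \<longleftrightarrow> (\<exists>i k. i < n \<and> 1 \<le> k \<and> k \<le> n \<and> A = {(i + t) mod n | t. t < k} \<and>
     (\<forall>t<k. perm_at (i + t)) \<and> (k < n \<longrightarrow> \<not> perm_at (i + n - 1) \<and> \<not> perm_at (i + k)))"
  unfolding perm_arc_def seg_at_def ..

lemma exists_run_start: "\<exists>i. perm_at i \<and> \<not> perm_at (i + n - 1)"
proof -
  obtain h where "h < n" "interval_seg_on c (s h)" using has_interval by blast
  then have not_h: "\<not> perm_at h" using interval_seg_on_not_perm[OF lines_distinct] by (simp add: seg_at_eq)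
  obtain p where "perm_at p" using exists_perm by blast
  moreover have "h + (p mod n + n - h) = p mod n + n" using \<open>h < n\<close> by simp
  ultimately have "perm_at (h + (p mod n + n - h))" by simp
  then have ex: "\<exists>t. perm_at (h + t)" by blast
  define t where "t = (LEAST t. perm_at (h + t))"
  have perm_t: "perm_at (h + t)" using LeastI_ex[OF ex] by (simp add: t_def)
  with not_h have "t \<noteq> 0" by (metis add_0_right)
  then have "t - 1 < t" by simp
  then have "\<not> perm_at (h + (t - 1))" by (rule not_less_Least[of _ "\<lambda>t. perm_at (h + t)", folded t_def])
  moreover have "h + t + n - 1 = h + (t - 1) + n" using \<open>t \<noteq> 0\<close> by simp
  ultimately show ?thesis using perm_t by (metis seg_at_add_n)
qed

lemma perm_arc_exists: "\<exists>A. perm_arc c d n s A"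
proof -
  obtain j where start: "perm_at j" "\<not> perm_at (j + n - 1)" using exists_run_start by blast
  define k where "k = (LEAST k. \<not> perm_at (j + k))"
  have "j + (n - 1) = j + n - 1" using n_pos by simp
  then have stop: "\<not> perm_at (j + k)" and "k \<le> n - 1"
    using LeastI[of "\<lambda>k. \<not> perm_at (j + k)" "n - 1"] Least_le[of "\<lambda>k. \<not> perm_at (j + k)" "n - 1"]
      start by (simp_all add: k_def)
  have "k \<noteq> 0" using stop start(1) by (metis add_0_right)
  have run: "\<forall>t<k. perm_at (j + t)" using not_less_Least k_def by blast
  have shift: "seg_at (j mod n + n - 1) = seg_at (j + n - 1)"
    using seg_at_mod_add[of j "n - 1"] n_pos by (metis Nat.add_diff_assoc One_nat_def Suc_leI)
  have "perm_arc c d n s {(j mod n + t) mod n | t. t < k}"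
    unfolding perm_arc_iff
    by (rule exI[of _ "j mod n"], rule exI[of _ k])
      (use shift start stop run \<open>k \<le> n - 1\<close> \<open>k \<noteq> 0\<close> n_pos in auto)
  then show ?thesis by blast
qed

lemma perm_arcE:
  assumes "perm_arc c d n s A"
  obtains k i where "2 \<le> k" "k \<le> 4" "k < n" "A = {(i + t) mod n | t. t < k}"
    and "\<forall>t<n. perm_at (i + t) \<longleftrightarrow> t < k"
proof -
  obtain i k where arc: "i < n" "1 \<le> k" "k \<le> n" "A = {(i + t) mod n | t. t < k}"
    and run: "\<forall>t<k. perm_at (i + t)"
    and ends: "k < n \<longrightarrow> \<not> perm_at (i + n - 1) \<and> \<not> perm_at (i + k)"
    using assms unfolding perm_arc_iff by blast
  have "k \<noteq> n"
  proof
    assume "k = n"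
    obtain h where "h < n" "interval_seg_on c (s h)" using has_interval by blast
    moreover obtain t where "t < n" "(i + t) mod n = h" using exists_mod_offset[OF \<open>h < n\<close>] by blast
    moreover have "perm_at (i + t)" using run \<open>k = n\<close> \<open>t < n\<close> by simp
    ultimately show False using interval_seg_on_not_perm[OF lines_distinct] by (simp add: seg_at_def)
  qed
  with arc(3) have "k < n" by simp
  with ends have "\<not> perm_at (i + k)" "\<not> perm_at (i + n - 1)" by simp_all
  note maximal = maximal_perm_run[OF run arc(2) \<open>k < n\<close> this]
  show thesis
    using that[OF maximal(1) perm_run_le_4[OF run \<open>k < n\<close>] \<open>k < n\<close> arc(4)] maximal(2) by blast
qed

lemma perm_arc_eq_perm_indices:
  assumes "perm_arc c d n s A"
  shows "A = {j. j < n \<and> perm_seg c d (s j)}"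
proof -
  obtain k i where "2 \<le> k" "k \<le> 4" "k < n" and A: "A = {(i + t) mod n | t. t < k}"
    and run: "\<forall>t<n. perm_at (i + t) \<longleftrightarrow> t < k"
    using assms by (rule perm_arcE)
  show ?thesis
  proof (intro set_eqI iffI)
    fix j assume "j \<in> A"
    with A obtain t where "t < k" "j = (i + t) mod n" by blast
    with run[rule_format, of t] \<open>k < n\<close> n_pos show "j \<in> {j. j < n \<and> perm_seg c d (s j)}"
      by (simp add: seg_at_def)
  next
    fix j assume "j \<in> {j. j < n \<and> perm_seg c d (s j)}"
    moreover obtain t where "t < n" "(i + t) mod n = j"
      using exists_mod_offset[of j n i] calculation by blast
    ultimately show "j \<in> A" using run[rule_format, of t] A by (auto simp: seg_at_def)
  qed
qed

lemma card_perm_arc: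
  assumes "perm_arc c d n s A"
  shows "2 \<le> card A \<and> card A \<le> 4"
proof -
  obtain k i where k: "2 \<le> k" "k \<le> 4" "k < n" and A: "A = {(i + t) mod n | t. t < k}"
    and "\<forall>t<n. perm_at (i + t) \<longleftrightarrow> t < k"
    using assms by (rule perm_arcE)
  have "A = (\<lambda>t. (i + t) mod n) ` {..<k}" using A by auto
  moreover have "inj_on (\<lambda>t. (i + t) mod n) {..<k}"
  proof (rule inj_onI)
    fix t u assume tu: "t \<in> {..<k}" "u \<in> {..<k}" and eq: "(i + t) mod n = (i + u) mod n"
    show "t = u"
    proof (cases "t \<le> u")
      case True
      then show ?thesis using mod_eq_imp_eq_nat[of "i + t" "i + u" n] tu eq k by simp
    next
      case False
      then show ?thesis using mod_eq_imp_eq_nat[of "i + u" "i + t" n] tu eq k by simp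
    qed
  qed
  ultimately show ?thesis using k by (simp add: card_image)
qed

theorem perm_arc_unique_card_bounds:
  "(\<exists>A. perm_arc c d n s A)
     \<and> (\<forall>A B. perm_arc c d n s A \<and> perm_arc c d n s B \<longrightarrow> A = B)
     \<and> (\<forall>A. perm_arc c d n s A \<longrightarrow> 2 \<le> card A \<and> card A \<le> 4)"
  using perm_arc_exists perm_arc_eq_perm_indices card_perm_arc by blast

end

lemma perm_seg_commute: "perm_seg c2 c1 = perm_seg c1 c2"
  by (auto simp: perm_seg_def)

lemma perm_arc_commute: "perm_arc c2 c1 = perm_arc c1 c2"
  by (intro ext) (simp only: perm_arc_def perm_seg_commute[of c2 c1])

lemma ip_cycle_if_star_model:
  assumes "n \<ge> 4" "ip_seg_star_model c1 c2 n s" "represents_cycle n s"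
    and "\<exists>i<n. interval_seg c1 c2 (s i)"
  shows "ip_cycle c1 c2 n s \<or> ip_cycle c2 c1 n s"
proof -
  have cd: "c1 \<noteq> c2" and kinds: "\<forall>i<n. interval_seg c1 c2 (s i) \<or> perm_seg c1 c2 (s i)"
    and one_line: "(\<forall>i<n. interval_seg c1 c2 (s i) \<longrightarrow> interval_seg_on c1 (s i)) \<or>
      (\<forall>i<n. interval_seg c1 c2 (s i) \<longrightarrow> interval_seg_on c2 (s i))"
    using assms(2) by (simp_all add: ip_seg_star_model_def ip_seg_model_def)
  from one_line show ?thesis
  proof
    assume "\<forall>i<n. interval_seg c1 c2 (s i) \<longrightarrow> interval_seg_on c1 (s i)"
    with cd kinds assms(1,3,4) have "ip_cycle c1 c2 n s"
      by (intro ip_cycle.intro) blast+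
    then show ?thesis ..
  next
    assume "\<forall>i<n. interval_seg c1 c2 (s i) \<longrightarrow> interval_seg_on c2 (s i)"
    with cd kinds assms(1,3,4) have "ip_cycle c2 c1 n s"
      unfolding perm_seg_commute[of c1 c2] by (intro ip_cycle.intro) blast+
    then show ?thesis ..
  qed
qed

theorem mainTheorem7:
  fixes c1 c2 :: real and n :: nat and s :: "nat \<Rightarrow> seg"
  assumes "n \<ge> 4"
    and "ip_seg_star_model c1 c2 n s"
    and "represents_cycle n s"
    and "\<exists>i<n. interval_seg c1 c2 (s i)"
  shows "(\<exists>A. perm_arc c1 c2 n s A)
       \<and> (\<forall>A B. perm_arc c1 c2 n s A \<and> perm_arc c1 c2 n s B \<longrightarrow> A = B)
       \<and> (\<forall>A. perm_arc c1 c2 n s A \<longrightarrow> 2 \<le> card A \<and> card A \<le> 4)"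
  using ip_cycle_if_star_model[OF assms]
proof
  assume "ip_cycle c1 c2 n s"
  then show ?thesis by (rule ip_cycle.perm_arc_unique_card_bounds)
next
  assume "ip_cycle c2 c1 n s"
  then show ?thesis
    using ip_cycle.perm_arc_unique_card_bounds unfolding perm_arc_commute[of c1 c2] by blast
qed

end
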